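(* Let $P$ be a finite poset of dimension $d$. There exists a constant $c_P$ such that for every positive integer $m$, if a set $S\subseteq[m]^d$ does not contain a copy of $P$, then $|S|\le c_P\, m^{d-1}$.
   Context: $[m]=\{1,\dots,m\}$ and $[m]^d$ is ordered pointwise: $(x_1,\dots,x_d)\le(y_1,\dots,y_d)$ iff $x_i\le y_i$ for all $i$. A subset $P'$ of a poset $Q$ is a copy of $P$ if the subposet of $Q$ induced on $P'$ is isomorphic to $P$. The (Dushnik–Miller) dimension of $P$ is the smallest positive integer $d$ for which there exist bijections $L_1,\dots,L_d:P\to[|P|]$ such that $p\le_P q$ iff $L_i(p)\le L_i(q)$ for every $i\in[d]$. *)

theory Defs
  imports Complex_Main
begin

definition partial_order_on_set :: "'a set \<Rightarrow> ('a \<Rightarrow> 'a \<Rightarrow> bool) \<Rightarrow> bool" where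
  "partial_order_on_set A le \<longleftrightarrow>
     (\<forall>x\<in>A. le x x) \<and>
     (\<forall>x\<in>A. \<forall>y\<in>A. le x y \<and> le y x \<longrightarrow> x = y) \<and>
     (\<forall>x\<in>A. \<forall>y\<in>A. \<forall>z\<in>A. le x y \<and> le y z \<longrightarrow> le x z)"

definition realizer :: "'a set \<Rightarrow> ('a \<Rightarrow> 'a \<Rightarrow> bool) \<Rightarrow> nat \<Rightarrow> bool" where
  "realizer A le d \<longleftrightarrow>
     (\<exists>L :: nat \<Rightarrow> 'a \<Rightarrow> nat.
        (\<forall>i<d. bij_betw (L i) A {1..card A}) \<and>
        (\<forall>p\<in>A. \<forall>q\<in>A. le p q \<longleftrightarrow> (\<forall>i<d. L i p \<le> L i q)))"

definition poset_dim :: "'a set \<Rightarrow> ('a \<Rightarrow> 'a \<Rightarrow> bool) \<Rightarrow> nat" where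
  "poset_dim A le = (LEAST d. 0 < d \<and> realizer A le d)"

definition grid :: "nat \<Rightarrow> nat \<Rightarrow> nat list set" where
  "grid m d = {x. length x = d \<and> set x \<subseteq> {1..m}}"

definition pw_le :: "nat list \<Rightarrow> nat list \<Rightarrow> bool" where
  "pw_le x y \<longleftrightarrow> list_all2 (\<le>) x y"

definition contains_copy :: "nat list set \<Rightarrow> 'a set \<Rightarrow> ('a \<Rightarrow> 'a \<Rightarrow> bool) \<Rightarrow> bool" where
  "contains_copy S A le \<longleftrightarrow>
     (\<exists>f. inj_on f A \<and> f ` A \<subseteq> S \<and>
          (\<forall>p\<in>A. \<forall>q\<in>A. le p q \<longleftrightarrow> pw_le (f p) (f q)))"

end

theory Submission
  imports Defs "HOL-Library.FuncSet" "HOL-Library.Product_Lexorder"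
begin

text \<open>
  Let \<open>L\<^sub>0, \<dots>, L\<^sub>d\<^sub>-\<^sub>1\<close> realize \<open>P\<close>. Points \<open>g(a) \<in> S\<close> with \<open>g(a)\<^sub>i < g(b)\<^sub>i\<close> whenever
  \<open>L\<^sub>i a < L\<^sub>i b\<close> form a copy of \<open>P\<close>, so it suffices to bound sets avoiding this point pattern;
  this is the Marcus--Tardos argument in the \<open>d\<close>-dimensional form of Klazar and Marcus, by
  induction on \<open>d\<close>. Cut \<open>[ts]\<^sup>d\<close> into \<open>t\<^sup>d\<close> blocks of side \<open>s\<close>; the blocks meeting \<open>S\<close> avoid
  the pattern in \<open>[t]\<^sup>d\<close>. Call a block wide in direction \<open>i\<close> if the projection of its points
  along \<open>i\<close> contains the \<open>(d-1)\<close>-dimensional pattern. If \<open>|P|\<close> blocks of one line in direction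
  \<open>i\<close> share a witness of this, the pattern is found in \<open>S\<close>; by pigeonhole over witnesses there
  are thus \<open>O(t\<^sup>d\<^sup>-\<^sup>1)\<close> wide blocks. A block that is nowhere wide has all its projections
  bounded by induction, hence few points by a discrete Loomis--Whitney estimate. The resulting
  recursion \<open>f(ts) \<le> f(t) B + C t\<^sup>d\<^sup>-\<^sup>1\<close> with \<open>2B \<le> s\<^sup>d\<^sup>-\<^sup>1\<close> yields
  \<open>f(m) = O(m\<^sup>d\<^sup>-\<^sup>1)\<close>.
\<close>

section \<open>Patterns in cubes\<close>

definition cube :: "nat \<Rightarrow> nat set \<Rightarrow> (nat \<Rightarrow> nat) set" where
  "cube m I = Pi\<^sub>E I (\<lambda>_. {1..m})"

text \<open>Only the strict comparisons of the coordinate orders \<open>L i\<close> are required of the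
  chosen points; this is the form in which patterns pass to blocks and to projections.\<close>
definition contains_pattern ::
    "'a set \<Rightarrow> (nat \<Rightarrow> 'a \<Rightarrow> nat) \<Rightarrow> nat set \<Rightarrow> (nat \<Rightarrow> nat) set \<Rightarrow> bool" where
  "contains_pattern A L I S \<longleftrightarrow>
     (\<exists>g. g ` A \<subseteq> S \<and> (\<forall>a\<in>A. \<forall>b\<in>A. \<forall>i\<in>I. L i a < L i b \<longrightarrow> g a i < g b i))"

definition drop_coord :: "nat set \<Rightarrow> nat \<Rightarrow> (nat \<Rightarrow> nat) \<Rightarrow> (nat \<Rightarrow> nat)" where
  "drop_coord I i x = restrict x (I - {i})"

definition lines_exceed :: "nat \<Rightarrow> nat set \<Rightarrow> (nat \<Rightarrow> nat) set \<Rightarrow> bool" where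
  "lines_exceed r I Z \<longleftrightarrow>
     (\<forall>z\<in>Z. \<forall>i\<in>I. r < card {z'\<in>Z. drop_coord I i z' = drop_coord I i z})"

lemma finite_cube: "finite I \<Longrightarrow> finite (cube m I)"
  by (simp add: cube_def finite_PiE)

lemma finite_if_subset_cube: "finite I \<Longrightarrow> S \<subseteq> cube m I \<Longrightarrow> finite S"
  using finite_cube by (rule finite_subset[rotated])

lemma card_cube: "finite I \<Longrightarrow> card (cube m I) = m ^ card I"
  by (simp add: cube_def card_PiE)

lemma cube_mono: "m \<le> m' \<Longrightarrow> cube m I \<subseteq> cube m' I"
  unfolding cube_def by (intro PiE_mono) auto

lemma cube_0: "I \<noteq> {} \<Longrightarrow> cube 0 I = {}"
  unfolding cube_def by auto

lemma drop_coord_in_cube: "x \<in> cube m I \<Longrightarrow> drop_coord I i x \<in> cube m (I - {i})"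
  by (auto simp: cube_def drop_coord_def)

lemma drop_coord_apply: "j \<in> I \<Longrightarrow> j \<noteq> i \<Longrightarrow> drop_coord I i x j = x j"
  by (simp add: drop_coord_def)

lemma drop_coord_eq_apply:
  assumes "x \<in> Pi\<^sub>E I X" "y \<in> Pi\<^sub>E I X" "drop_coord I i x = drop_coord I i y" "j \<noteq> i"
  shows "x j = y j"
proof (cases "j \<in> I")
  case True
  then show ?thesis using fun_cong[OF assms(3), of j] assms(4) by (simp add: drop_coord_apply)
next
  case False
  then show ?thesis using assms(1,2) by (simp add: PiE_def extensional_def)
qed

lemma drop_coord_eq_imp_eq:
  assumes "x \<in> Pi\<^sub>E I X" "y \<in> Pi\<^sub>E I X" "drop_coord I i x = drop_coord I i y" "x i = y i"
  shows "x = y"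
  using drop_coord_eq_apply[OF assms(1-3)] assms by (metis PiE_ext)

lemma inj_on_apply_if_drop_coord_eq:
  assumes "Q \<subseteq> Pi\<^sub>E I X" "\<And>b. b \<in> Q \<Longrightarrow> drop_coord I i b = l"
  shows "inj_on (\<lambda>b. b i) Q"
proof (rule inj_onI)
  fix b b' assume "b \<in> Q" "b' \<in> Q" "b i = b' i"
  then show "b = b'" using assms drop_coord_eq_imp_eq[of b I X b' i] by blast
qed

lemma card_le_mult_if_fibres_le:
  assumes "finite F" "f ` H \<subseteq> F" "\<And>y. y \<in> F \<Longrightarrow> card {x\<in>H. f x = y} \<le> q"
  shows "card H \<le> card F * q"
proof -
  have "H = (\<Union>y\<in>F. {x\<in>H. f x = y})" using assms(2) by auto
  then have "card H \<le> (\<Sum>y\<in>F. card {x\<in>H. f x = y})" by (metis card_UN_le assms(1))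
  also have "\<dots> \<le> (\<Sum>y\<in>F. q)" using assms(3) by (intro sum_mono)
  finally show ?thesis by simp
qed

lemma ex_order_embedding_into:
  fixes f :: "'a \<Rightarrow> nat" and W :: "nat set"
  assumes "finite A" "inj_on f A" "finite W" "card A \<le> card W"
  shows "\<exists>h. h ` A \<subseteq> W \<and> (\<forall>a\<in>A. \<forall>b\<in>A. f a < f b \<longrightarrow> h a < h b)"
proof -
  define xs where "xs = sorted_list_of_set W"
  define rank where "rank a = card {b\<in>A. f b < f a}" for a
  have len: "card A \<le> length xs" and sorted: "sorted_wrt (<) xs" and set: "set xs = W"
    using assms(3,4) by (simp_all add: xs_def strict_sorted_list_of_set)
  have rank_less: "rank a < card A" if "a \<in> A" for a
    unfolding rank_def using that assms(1) by (intro psubset_card_mono) auto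
  have rank_mono: "rank a < rank b" if "a \<in> A" "b \<in> A" "f a < f b" for a b
    unfolding rank_def using that assms(1) by (intro psubset_card_mono) auto
  show ?thesis
  proof (intro exI[of _ "\<lambda>a. xs ! rank a"] conjI ballI impI subsetI)
    fix y assume "y \<in> (\<lambda>a. xs ! rank a) ` A"
    then obtain a where "a \<in> A" "y = xs ! rank a" by blast
    then show "y \<in> W" using rank_less[of a] len set by (metis nth_mem order_less_le_trans)
  next
    fix a b assume "a \<in> A" "b \<in> A" "f a < f b"
    then show "xs ! rank a < xs ! rank b"
      using rank_mono rank_less[of b] len sorted by (metis order_less_le_trans sorted_wrt_nth_less)
  qed
qed

lemma ex_lift_through_image:
  assumes "g ` A \<subseteq> \<phi> ` S"
  obtains g' where "g' ` A \<subseteq> S" "\<And>a. a \<in> A \<Longrightarrow> \<phi> (g' a) = g a"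
proof -
  have "g a \<in> \<phi> ` S" if "a \<in> A" for a using assms that by blast
  then show thesis
    by (intro that[of "\<lambda>a. inv_into S \<phi> (g a)"]) (auto simp: inv_into_into f_inv_into_f)
qed

lemma contains_pattern_iff_PiE:
  "contains_pattern A L I S \<longleftrightarrow>
     (\<exists>g\<in>Pi\<^sub>E A (\<lambda>_. S). \<forall>a\<in>A. \<forall>b\<in>A. \<forall>i\<in>I. L i a < L i b \<longrightarrow> g a i < g b i)"
  unfolding contains_pattern_def
proof
  assume "\<exists>g. g ` A \<subseteq> S \<and> (\<forall>a\<in>A. \<forall>b\<in>A. \<forall>i\<in>I. L i a < L i b \<longrightarrow> g a i < g b i)"
  then obtain g where "g ` A \<subseteq> S" "\<forall>a\<in>A. \<forall>b\<in>A. \<forall>i\<in>I. L i a < L i b \<longrightarrow> g a i < g b i"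
    by blast
  then show "\<exists>g\<in>Pi\<^sub>E A (\<lambda>_. S). \<forall>a\<in>A. \<forall>b\<in>A. \<forall>i\<in>I. L i a < L i b \<longrightarrow> g a i < g b i"
    by (intro bexI[of _ "restrict g A"]) auto
qed (auto simp: PiE_iff)

lemma contains_pattern_if_image:
  assumes "contains_pattern A L I (\<phi> ` S)"
    and "\<And>x y j. x \<in> S \<Longrightarrow> y \<in> S \<Longrightarrow> j \<in> I \<Longrightarrow> \<phi> x j < \<phi> y j \<Longrightarrow> x j < y j"
  shows "contains_pattern A L I S"
proof -
  obtain g where g: "g ` A \<subseteq> \<phi> ` S" "\<forall>a\<in>A. \<forall>b\<in>A. \<forall>i\<in>I. L i a < L i b \<longrightarrow> g a i < g b i"
    using assms(1) unfolding contains_pattern_def by blast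
  obtain g' where g': "g' ` A \<subseteq> S" "\<And>a. a \<in> A \<Longrightarrow> \<phi> (g' a) = g a"
    using ex_lift_through_image[OF g(1)] by blast
  have "g' a i < g' b i" if "a \<in> A" "b \<in> A" "i \<in> I" "L i a < L i b" for a b i
  proof -
    have "\<phi> (g' a) i < \<phi> (g' b) i" using g(2) g'(2) that by simp
    then show ?thesis using assms(2) g'(1) that(1-3) by blast
  qed
  then show ?thesis unfolding contains_pattern_def using g'(1) by blast
qed

lemma card_less_if_avoids_pattern_1d:
  assumes "finite A" "inj_on (L i) A" "S \<subseteq> cube m {i}" "\<not> contains_pattern A L {i} S"
  shows "card S < card A"
proof (rule ccontr)
  assume "\<not> card S < card A"
  moreover have "inj_on (\<lambda>x. x i) S"
    using assms(3) unfolding cube_def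
    by (rule inj_on_apply_if_drop_coord_eq[where l = "\<lambda>_. undefined"])
      (simp add: drop_coord_def restrict_def)
  moreover have "finite S" using finite_if_subset_cube[OF _ assms(3)] by simp
  ultimately obtain h where h: "h ` A \<subseteq> (\<lambda>x. x i) ` S"
      and mono: "\<forall>a\<in>A. \<forall>b\<in>A. L i a < L i b \<longrightarrow> h a < h b"
    using ex_order_embedding_into[OF assms(1,2), of "(\<lambda>x. x i) ` S"] by (auto simp: card_image)
  obtain g where "g ` A \<subseteq> S" "\<And>a. a \<in> A \<Longrightarrow> g a i = h a"
    using ex_lift_through_image[OF h] by blast
  then have "contains_pattern A L {i} S"
    unfolding contains_pattern_def using mono by (intro exI[of _ g]) simp
  then show False using assms(4) by blast
qed

section \<open>A discrete Loomis--Whitney estimate\<close>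

lemma sum_card_drop_coord_Diff_line_less:
  assumes "finite Y" "finite I" "y \<in> Y" "i \<in> I"
  shows "(\<Sum>j\<in>I. card (drop_coord I j ` (Y - {y'\<in>Y. drop_coord I i y' = drop_coord I i y})))
    < (\<Sum>j\<in>I. card (drop_coord I j ` Y))"
proof (rule sum_strict_mono_ex1[OF assms(2)])
  define Y' where "Y' = Y - {y'\<in>Y. drop_coord I i y' = drop_coord I i y}"
  show "\<forall>j\<in>I. card (drop_coord I j ` Y') \<le> card (drop_coord I j ` Y)"
    using assms(1) unfolding Y'_def by (simp add: card_mono image_mono)
  have "drop_coord I i ` Y' \<subseteq> drop_coord I i ` Y" "drop_coord I i y \<notin> drop_coord I i ` Y'"
    unfolding Y'_def by auto
  then have "drop_coord I i ` Y' \<subset> drop_coord I i ` Y" using assms(3) by blast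
  then show "\<exists>j\<in>I. card (drop_coord I j ` Y') < card (drop_coord I j ` Y)"
    using assms(1,4) by (meson finite_imageI psubset_card_mono)
qed

text \<open>Repeatedly discarding a line with at most \<open>r\<close> points either exhausts \<open>Y\<close>, each step
  costing at most \<open>r\<close> points and removing a point from some projection, or gets stuck at a
  nonempty set all of whose lines are long.\<close>
lemma card_le_projections_or_lines_exceed:
  assumes "finite Y" "finite I"
  shows "card Y \<le> r * (\<Sum>i\<in>I. card (drop_coord I i ` Y)) \<or>
         (\<exists>Z\<subseteq>Y. Z \<noteq> {} \<and> lines_exceed r I Z)"
  using assms(1)
proof (induction Y rule: finite_psubset_induct)
  case (psubset Y)
  show ?case
  proof (cases "lines_exceed r I Y")
    case True
    then show ?thesis by (cases "Y = {}") (simp, blast)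
  next
    case False
    then obtain y i where y: "y \<in> Y" and i: "i \<in> I"
      and short: "card {y'\<in>Y. drop_coord I i y' = drop_coord I i y} \<le> r"
      unfolding lines_exceed_def by (auto simp: not_less)
    define Y' where "Y' = Y - {y'\<in>Y. drop_coord I i y' = drop_coord I i y}"
    have "Y' \<subset> Y" unfolding Y'_def using y by blast
    from psubset.IH[OF this] show ?thesis
    proof
      assume IH: "card Y' \<le> r * (\<Sum>j\<in>I. card (drop_coord I j ` Y'))"
      have "card Y \<le> card Y' + r"
        using short psubset.hyps unfolding Y'_def by (simp add: card_Diff_subset)
      also have "\<dots> \<le> r * ((\<Sum>j\<in>I. card (drop_coord I j ` Y')) + 1)" using IH by simp
      also have "\<dots> \<le> r * (\<Sum>j\<in>I. card (drop_coord I j ` Y))"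
        using sum_card_drop_coord_Diff_line_less[OF psubset.hyps assms(2) y i]
        unfolding Y'_def by (intro mult_le_mono2) simp
      finally show ?thesis by blast
    next
      assume "\<exists>Z\<subseteq>Y'. Z \<noteq> {} \<and> lines_exceed r I Z"
      then show ?thesis using \<open>Y' \<subset> Y\<close> by blast
    qed
  qed
qed

lemma card_slice_ge_if_lines_exceed:
  assumes fin: "finite Z" and sub: "Z \<subseteq> Pi\<^sub>E I X" and exceed: "lines_exceed r I Z"
    and "finite J" "J \<subseteq> I" "z \<in> Z"
  shows "(r + 1) ^ card J \<le> card {z'\<in>Z. \<forall>l. l \<notin> J \<longrightarrow> z' l = z l}"
  using assms(4-6)
proof (induction J arbitrary: z rule: finite_induct)
  case empty
  then have "{z'\<in>Z. \<forall>l. l \<notin> {} \<longrightarrow> z' l = z l} \<noteq> {}" by blast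
  then show ?case using fin by (simp add: card_gt_0_iff Suc_le_eq)
next
  case (insert j J)
  define line where "line = {w\<in>Z. drop_coord I j w = drop_coord I j z}"
  define slice where "slice w = {z'\<in>Z. \<forall>l. l \<notin> J \<longrightarrow> z' l = w l}" for w
  have line_eq: "w l = z l" if "w \<in> line" "l \<noteq> j" for w l
    using that sub insert.prems(2) unfolding line_def
    by (intro drop_coord_eq_apply[of w I X z j l]) auto
  have "r + 1 \<le> card line"
    using exceed insert.prems unfolding line_def lines_exceed_def by fastforce
  have union_sub: "(\<Union>w\<in>line. slice w) \<subseteq> {z'\<in>Z. \<forall>l. l \<notin> insert j J \<longrightarrow> z' l = z l}"
    unfolding slice_def using line_eq by auto
  have disjoint: "slice w \<inter> slice w' = {}" if "w \<in> line" "w' \<in> line" "w \<noteq> w'" for w w'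
  proof -
    have "w j \<noteq> w' j" using that line_eq by (metis ext)
    then show ?thesis unfolding slice_def using insert.hyps(2) by auto
  qed
  have "(r + 1) ^ card (insert j J) = (r + 1) * (r + 1) ^ card J" using insert.hyps by simp
  also have "\<dots> \<le> card line * (r + 1) ^ card J" using \<open>r + 1 \<le> card line\<close> by (rule mult_le_mono1)
  also have "\<dots> = (\<Sum>w\<in>line. (r + 1) ^ card J)" by simp
  also have "\<dots> \<le> (\<Sum>w\<in>line. card (slice w))"
    using insert unfolding line_def slice_def by (intro sum_mono) auto
  also have "\<dots> = card (\<Union>w\<in>line. slice w)"
    using disjoint fin unfolding line_def
    by (intro card_UN_disjoint[symmetric]) (auto simp: slice_def)
  also have "\<dots> \<le> card {z'\<in>Z. \<forall>l. l \<notin> insert j J \<longrightarrow> z' l = z l}"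
    using fin union_sub by (intro card_mono) auto
  finally show ?case .
qed

lemma card_le_if_projections_le:
  assumes fin: "finite Y" and sub: "Y \<subseteq> Pi\<^sub>E I X" and "finite I" "I \<noteq> {}"
    and proj_le: "\<And>i. i \<in> I \<Longrightarrow> card (drop_coord I i ` Y) \<le> p"
    and p_less: "p < (r + 1) ^ (card I - 1)"
  shows "card Y \<le> r * (card I * p)"
  using card_le_projections_or_lines_exceed[OF fin \<open>finite I\<close>, of r]
proof
  assume "card Y \<le> r * (\<Sum>i\<in>I. card (drop_coord I i ` Y))"
  also have "\<dots> \<le> r * (\<Sum>i\<in>I. p)" using proj_le by (intro mult_le_mono2 sum_mono)
  finally show ?thesis by simp
next
  assume "\<exists>Z\<subseteq>Y. Z \<noteq> {} \<and> lines_exceed r I Z"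
  then obtain Z z where Z: "Z \<subseteq> Y" "lines_exceed r I Z" and z: "z \<in> Z" by blast
  obtain i where i: "i \<in> I" using \<open>I \<noteq> {}\<close> by blast
  define slice where "slice = {z'\<in>Z. \<forall>l. l \<notin> I - {i} \<longrightarrow> z' l = z l}"
  have "finite Z" "Z \<subseteq> Pi\<^sub>E I X" using Z fin sub by (auto intro: finite_subset)
  have "slice \<subseteq> Y" unfolding slice_def using Z by blast
  have "inj_on (drop_coord I i) slice"
  proof (rule inj_onI)
    fix x y assume "x \<in> slice" "y \<in> slice" "drop_coord I i x = drop_coord I i y"
    moreover have "x i = y i" using \<open>x \<in> slice\<close> \<open>y \<in> slice\<close> unfolding slice_def by simp
    moreover have "x \<in> Pi\<^sub>E I X" "y \<in> Pi\<^sub>E I X" using \<open>x \<in> slice\<close> \<open>y \<in> slice\<close> \<open>slice \<subseteq> Y\<close> sub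
      by blast+
    ultimately show "x = y" using drop_coord_eq_imp_eq by blast
  qed
  have "card (I - {i}) = card I - 1" using i \<open>finite I\<close> by simp
  then have "(r + 1) ^ (card I - 1) \<le> card slice"
    using card_slice_ge_if_lines_exceed[OF \<open>finite Z\<close> \<open>Z \<subseteq> Pi\<^sub>E I X\<close> Z(2), of "I - {i}" z]
      \<open>finite I\<close> z unfolding slice_def by simp
  also have "\<dots> = card (drop_coord I i ` slice)" using \<open>inj_on _ slice\<close> by (simp add: card_image)
  also have "\<dots> \<le> card (drop_coord I i ` Y)"
    using \<open>slice \<subseteq> Y\<close> fin by (simp add: card_mono image_mono)
  also have "\<dots> \<le> p" using proj_le i by blast
  finally show ?thesis using p_less by simp
qed

definition block :: "nat \<Rightarrow> nat set \<Rightarrow> (nat \<Rightarrow> nat) \<Rightarrow> (nat \<Rightarrow> nat)" where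
  "block s I x = (\<lambda>j\<in>I. (x j - 1) div s + 1)"

definition offset :: "nat \<Rightarrow> nat set \<Rightarrow> (nat \<Rightarrow> nat) \<Rightarrow> (nat \<Rightarrow> nat)" where
  "offset s I x = (\<lambda>j\<in>I. (x j - 1) mod s + 1)"

definition shadow :: "nat \<Rightarrow> nat set \<Rightarrow> (nat \<Rightarrow> nat) set \<Rightarrow> nat \<Rightarrow> (nat \<Rightarrow> nat) \<Rightarrow> (nat \<Rightarrow> nat) set" where
  "shadow s I S i b = drop_coord I i ` offset s I ` {x\<in>S. block s I x = b}"

lemma block_in_cube:
  assumes "0 < s" "x \<in> cube (t * s) I"
  shows "block s I x \<in> cube t I"
proof -
  have "(x j - 1) div s < t" if "j \<in> I" for j
  proof -
    have "x j \<in> {1..t * s}" using assms(2) that by (auto simp: cube_def)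
    then show ?thesis using assms(1) by (auto simp: div_less_iff_less_mult)
  qed
  then show ?thesis by (auto simp: cube_def block_def Suc_le_eq)
qed

lemma offset_in_cube: "0 < s \<Longrightarrow> offset s I x \<in> cube s I"
  by (auto simp: cube_def offset_def Suc_le_eq)

lemma shadow_subset_cube: "0 < s \<Longrightarrow> shadow s I S i b \<subseteq> cube s (I - {i})"
  unfolding shadow_def using offset_in_cube drop_coord_in_cube by blast

lemma block_offset_eq_imp_eq:
  assumes "x \<in> cube m I" "y \<in> cube m I" "block s I x = block s I y" "offset s I x = offset s I y"
  shows "x = y"
proof (rule PiE_ext[of x I "\<lambda>_. {1..m}"])
  fix j assume "j \<in> I"
  then have "(x j - 1) div s = (y j - 1) div s" "(x j - 1) mod s = (y j - 1) mod s"
    using fun_cong[OF assms(3), of j] fun_cong[OF assms(4), of j]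
    by (auto simp: block_def offset_def)
  then have "x j - 1 = y j - 1" by (metis div_mod_decomp)
  moreover have "1 \<le> x j" "1 \<le> y j" using assms(1,2) \<open>j \<in> I\<close> by (auto simp: cube_def)
  ultimately show "x j = y j" by linarith
qed (use assms in \<open>auto simp: cube_def\<close>)

lemma less_if_block_less:
  assumes "j \<in> I" "block s I x j < block s I y j"
  shows "x j < y j"
proof -
  have "(x j - 1) div s < (y j - 1) div s" using assms by (simp add: block_def)
  then have "x j - 1 < y j - 1" using div_le_mono not_less by blast
  then show ?thesis by linarith
qed

lemma less_if_offset_less:
  assumes "x \<in> cube m I" "y \<in> cube m' I" "j \<in> I"
    and "block s I x j = block s I y j" "offset s I x j < offset s I y j"
  shows "x j < y j"
proof -
  have "(x j - 1) div s = (y j - 1) div s" "(x j - 1) mod s < (y j - 1) mod s"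
    using assms(3-5) by (auto simp: block_def offset_def)
  then have "x j - 1 < y j - 1" by (metis add_less_cancel_left div_mod_decomp mult.commute)
  moreover have "1 \<le> x j" "1 \<le> y j" using assms(1-3) by (auto simp: cube_def)
  ultimately show ?thesis by linarith
qed

lemma contains_pattern_if_blocks_contain:
  "contains_pattern A L I (block s I ` S) \<Longrightarrow> contains_pattern A L I S"
  by (erule contains_pattern_if_image) (rule less_if_block_less)

section \<open>Wide blocks\<close>

lemma contains_pattern_if_ordered_along_line:
  assumes "S \<subseteq> cube m I" "i \<in> I" "g ` A \<subseteq> S"
    and same_line: "\<And>a b. a \<in> A \<Longrightarrow> b \<in> A \<Longrightarrow>
      drop_coord I i (block s I (g a)) = drop_coord I i (block s I (g b))"
    and along: "\<And>a b. a \<in> A \<Longrightarrow> b \<in> A \<Longrightarrow> L i a < L i b \<Longrightarrow>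
      block s I (g a) i < block s I (g b) i"
    and across: "\<And>a b j. a \<in> A \<Longrightarrow> b \<in> A \<Longrightarrow> j \<in> I - {i} \<Longrightarrow> L j a < L j b \<Longrightarrow>
      offset s I (g a) j < offset s I (g b) j"
  shows "contains_pattern A L I S"
proof -
  have "g a j < g b j" if "a \<in> A" "b \<in> A" "j \<in> I" "L j a < L j b" for a b j
  proof (cases "j = i")
    case True
    then show ?thesis using along[OF that(1,2)] that(3,4) by (blast intro: less_if_block_less)
  next
    case False
    have "block s I (g a) j = block s I (g b) j"
      using fun_cong[OF same_line[OF that(1,2)], of j] drop_coord_apply[OF that(3) False] by simp
    moreover have "g a \<in> cube m I" "g b \<in> cube m I" using assms(1,3) that(1,2) by blast+
    ultimately show ?thesis
      using less_if_offset_less[of "g a" m I "g b" m j s] across[OF that(1,2)] that(3,4) False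
      by blast
  qed
  then show ?thesis unfolding contains_pattern_def using assms(3) by blast
qed

text \<open>The pigeonhole step of Marcus and Tardos: the blocks order the pattern along the line,
  the common witness orders it across.\<close>
lemma contains_pattern_if_common_witness:
  assumes "finite A" "inj_on (L i) A" "i \<in> I" "S \<subseteq> cube m I"
    and "finite Q" "Q \<subseteq> block s I ` S" "card A \<le> card Q"
    and same_line: "\<And>b. b \<in> Q \<Longrightarrow> drop_coord I i b = l"
    and witness: "\<And>b a. b \<in> Q \<Longrightarrow> a \<in> A \<Longrightarrow> f a \<in> shadow s I S i b"
    and f_pattern: "\<forall>a\<in>A. \<forall>b\<in>A. \<forall>j\<in>I - {i}. L j a < L j b \<longrightarrow> f a j < f b j"
  shows "contains_pattern A L I S"
proof -
  have "Q \<subseteq> Pi\<^sub>E I (\<lambda>_. UNIV)" using \<open>Q \<subseteq> block s I ` S\<close> by (auto simp: block_def)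
  then have "inj_on (\<lambda>b. b i) Q" using same_line by (rule inj_on_apply_if_drop_coord_eq)
  then have "card A \<le> card ((\<lambda>b. b i) ` Q)" using assms(7) by (simp add: card_image)
  then obtain h where h: "h ` A \<subseteq> (\<lambda>b. b i) ` Q"
      and h_mono: "\<forall>a\<in>A. \<forall>a'\<in>A. L i a < L i a' \<longrightarrow> h a < h a'"
    using ex_order_embedding_into[OF assms(1,2)] assms(5) by blast
  obtain bb where bb: "bb ` A \<subseteq> Q" "\<And>a. a \<in> A \<Longrightarrow> bb a i = h a"
    using ex_lift_through_image[OF h] by blast
  have "\<exists>x. x \<in> S \<and> block s I x = bb a \<and> drop_coord I i (offset s I x) = f a" if "a \<in> A" for a
  proof -
    have "f a \<in> shadow s I S i (bb a)" using witness bb(1) that by blast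
    then show ?thesis unfolding shadow_def by auto
  qed
  then obtain g where g: "\<And>a. a \<in> A \<Longrightarrow>
      g a \<in> S \<and> block s I (g a) = bb a \<and> drop_coord I i (offset s I (g a)) = f a"
    by metis
  show ?thesis
  proof (rule contains_pattern_if_ordered_along_line[OF assms(4,3)])
    show "g ` A \<subseteq> S" using g by blast
    show "drop_coord I i (block s I (g a)) = drop_coord I i (block s I (g a'))"
      if "a \<in> A" "a' \<in> A" for a a'
      using g same_line bb(1) that by (simp add: image_subset_iff)
    show "block s I (g a) i < block s I (g a') i" if "a \<in> A" "a' \<in> A" "L i a < L i a'" for a a'
      using g bb(2) h_mono that by simp
    show "offset s I (g a) j < offset s I (g a') j"
      if "a \<in> A" "a' \<in> A" "j \<in> I - {i}" "L j a < L j a'" for a a' j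
    proof -
      have "offset s I (g a) j = f a j" "offset s I (g a') j = f a' j"
        using g[OF that(1)] g[OF that(2)] drop_coord_apply[of j I i] that(3)
        by (metis DiffD1 DiffD2 singletonI)+
      then show ?thesis using f_pattern that by simp
    qed
  qed
qed

lemma card_wide_blocks_in_line_le:
  assumes "finite A" "inj_on (L i) A" "i \<in> I" "finite I" "0 < s"
    and "S \<subseteq> cube m I" "\<not> contains_pattern A L I S"
  shows "card {b \<in> block s I ` S.
      contains_pattern A L (I - {i}) (shadow s I S i b) \<and> drop_coord I i b = l}
    \<le> card (cube s (I - {i})) ^ card A * (card A - 1)"
proof -
  define H where
    "H = {b \<in> block s I ` S.
      contains_pattern A L (I - {i}) (shadow s I S i b) \<and> drop_coord I i b = l}"
  define F where "F = Pi\<^sub>E A (\<lambda>_. cube s (I - {i}))"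
  have "finite H" using finite_if_subset_cube[OF assms(4,6)] unfolding H_def by simp
  have "0 < card A"
    using assms(1,7) unfolding contains_pattern_def by (auto simp: card_gt_0_iff)
  have "\<exists>w\<in>F. w ` A \<subseteq> shadow s I S i b \<and>
      (\<forall>a\<in>A. \<forall>a'\<in>A. \<forall>j\<in>I - {i}. L j a < L j a' \<longrightarrow> w a j < w a' j)" if b: "b \<in> H" for b
  proof -
    have "Pi\<^sub>E A (\<lambda>_. shadow s I S i b) \<subseteq> F"
      unfolding F_def using shadow_subset_cube[OF assms(5)] by (intro PiE_mono)
    moreover obtain w where "w \<in> Pi\<^sub>E A (\<lambda>_. shadow s I S i b)"
      and "\<forall>a\<in>A. \<forall>a'\<in>A. \<forall>j\<in>I - {i}. L j a < L j a' \<longrightarrow> w a j < w a' j"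
      using b unfolding H_def contains_pattern_iff_PiE by blast
    moreover have "w ` A \<subseteq> shadow s I S i b"
      using \<open>w \<in> Pi\<^sub>E A _\<close> by (simp add: PiE_iff image_subset_iff)
    ultimately show ?thesis by blast
  qed
  then obtain w where w: "\<And>b. b \<in> H \<Longrightarrow> w b \<in> F \<and> w b ` A \<subseteq> shadow s I S i b"
    and w_pattern: "\<And>b. b \<in> H \<Longrightarrow> \<forall>a\<in>A. \<forall>a'\<in>A. \<forall>j\<in>I - {i}. L j a < L j a' \<longrightarrow> w b a j < w b a' j"
    by metis
  have "card {b\<in>H. w b = f} \<le> card A - 1" for f
  proof (rule ccontr)
    define Q where "Q = {b\<in>H. w b = f}"
    assume "\<not> card {b\<in>H. w b = f} \<le> card A - 1"
    then have "card A \<le> card Q" unfolding Q_def by linarith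
    then obtain b0 where "b0 \<in> Q" using \<open>0 < card A\<close> by (metis card.empty ex_in_conv not_le)
    have "contains_pattern A L I S"
    proof (rule contains_pattern_if_common_witness[of A L i I S m, OF assms(1-3,6)])
      show "finite Q" using \<open>finite H\<close> unfolding Q_def by simp
      show "Q \<subseteq> block s I ` S" unfolding Q_def H_def by blast
      show "drop_coord I i b = l" if "b \<in> Q" for b using that unfolding Q_def H_def by blast
      show "f a \<in> shadow s I S i b" if "b \<in> Q" "a \<in> A" for a b
        using that w unfolding Q_def by blast
      show "\<forall>a\<in>A. \<forall>a'\<in>A. \<forall>j\<in>I - {i}. L j a < L j a' \<longrightarrow> f a j < f a' j"
        using w_pattern \<open>b0 \<in> Q\<close> unfolding Q_def by blast
    qed fact
    then show False using assms(7) by blast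
  qed
  then have "card H \<le> card F * (card A - 1)"
    using w assms(1,4)
    by (intro card_le_mult_if_fibres_le) (auto simp: F_def finite_cube finite_PiE)
  then show ?thesis unfolding H_def F_def using assms(1) by (simp add: card_PiE)
qed

lemma card_blocks_wide_in_direction_le:
  assumes "finite A" "inj_on (L i) A" "i \<in> I" "finite I" "0 < s"
    and "S \<subseteq> cube (t * s) I" "\<not> contains_pattern A L I S"
  shows "card {b \<in> block s I ` S. contains_pattern A L (I - {i}) (shadow s I S i b)}
    \<le> t ^ (card I - 1) * ((s ^ (card I - 1)) ^ card A * (card A - 1))"
proof -
  define wide where "wide = {b \<in> block s I ` S. contains_pattern A L (I - {i}) (shadow s I S i b)}"
  have "drop_coord I i b \<in> cube t (I - {i})" if "b \<in> wide" for b
  proof -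
    have "b \<in> cube t I" using that assms(5,6) block_in_cube unfolding wide_def by blast
    then show ?thesis by (rule drop_coord_in_cube)
  qed
  then have "wide = (\<Union>l\<in>cube t (I - {i}). {b\<in>wide. drop_coord I i b = l})" by blast
  then have "card wide = card (\<Union>l\<in>cube t (I - {i}). {b\<in>wide. drop_coord I i b = l})"
    by (rule arg_cong)
  also have "\<dots> \<le> (\<Sum>l\<in>cube t (I - {i}). card {b\<in>wide. drop_coord I i b = l})"
    using assms(4) by (intro card_UN_le finite_cube) simp
  also have "\<dots> \<le> (\<Sum>l\<in>cube t (I - {i}). card (cube s (I - {i})) ^ card A * (card A - 1))"
  proof (rule sum_mono)
    fix l
    have "{b\<in>wide. drop_coord I i b = l} = {b \<in> block s I ` S.
        contains_pattern A L (I - {i}) (shadow s I S i b) \<and> drop_coord I i b = l}"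
      unfolding wide_def by blast
    then show "card {b\<in>wide. drop_coord I i b = l}
        \<le> card (cube s (I - {i})) ^ card A * (card A - 1)"
      using card_wide_blocks_in_line_le[OF assms(1-5,6,7)] by simp
  qed
  finally show ?thesis using assms(3,4) by (simp add: card_cube wide_def)
qed

definition wide_blocks ::
    "nat \<Rightarrow> nat set \<Rightarrow> (nat \<Rightarrow> nat) set \<Rightarrow> 'a set \<Rightarrow> (nat \<Rightarrow> 'a \<Rightarrow> nat) \<Rightarrow> (nat \<Rightarrow> nat) set" where
  "wide_blocks s I S A L =
     {b \<in> block s I ` S. \<exists>i\<in>I. contains_pattern A L (I - {i}) (shadow s I S i b)}"

lemma card_wide_blocks_le:
  assumes "finite A" "\<And>i. i \<in> I \<Longrightarrow> inj_on (L i) A" "finite I" "0 < s"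
    and "S \<subseteq> cube (t * s) I" "\<not> contains_pattern A L I S"
  shows "card (wide_blocks s I S A L)
    \<le> card I * (t ^ (card I - 1) * ((s ^ (card I - 1)) ^ card A * (card A - 1)))"
proof -
  have "wide_blocks s I S A L =
      (\<Union>i\<in>I. {b \<in> block s I ` S. contains_pattern A L (I - {i}) (shadow s I S i b)})"
    unfolding wide_blocks_def by blast
  then have "card (wide_blocks s I S A L)
      \<le> (\<Sum>i\<in>I. card {b \<in> block s I ` S. contains_pattern A L (I - {i}) (shadow s I S i b)})"
    using card_UN_le[OF assms(3)] by simp
  also have "\<dots> \<le> (\<Sum>i\<in>I. t ^ (card I - 1) * ((s ^ (card I - 1)) ^ card A * (card A - 1)))"
    using card_blocks_wide_in_direction_le[OF assms(1) assms(2) _ assms(3-6)] by (intro sum_mono)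
  finally show ?thesis by simp
qed

section \<open>The recursion over block sizes\<close>

lemma inj_on_offset_block: "S \<subseteq> cube m I \<Longrightarrow> inj_on (offset s I) {x\<in>S. block s I x = b}"
proof (rule inj_onI)
  fix x y assume "S \<subseteq> cube m I" "x \<in> {x\<in>S. block s I x = b}" "y \<in> {x\<in>S. block s I x = b}"
    "offset s I x = offset s I y"
  then show "x = y" by (intro block_offset_eq_imp_eq[of x m I y s]) auto
qed

lemma card_block_le:
  assumes "finite I" "0 < s" "S \<subseteq> cube m I"
  shows "card {x\<in>S. block s I x = b} \<le> s ^ card I"
proof -
  have "card {x\<in>S. block s I x = b} = card (offset s I ` {x\<in>S. block s I x = b})"
    using inj_on_offset_block[OF assms(3)] by (simp add: card_image)
  also have "\<dots> \<le> card (cube s I)"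
    using offset_in_cube[OF assms(2)] finite_cube[OF assms(1)] by (intro card_mono) blast+
  finally show ?thesis using assms(1) by (simp add: card_cube)
qed

lemma card_narrow_block_le:
  assumes "finite I" "I \<noteq> {}" "0 < s" "S \<subseteq> cube m I"
    and "b \<in> block s I ` S" "b \<notin> wide_blocks s I S A L"
    and slices: "\<And>i S'. i \<in> I \<Longrightarrow> S' \<subseteq> cube s (I - {i}) \<Longrightarrow>
      \<not> contains_pattern A L (I - {i}) S' \<Longrightarrow> card S' \<le> p"
    and "p < (r + 1) ^ (card I - 1)"
  shows "card {x\<in>S. block s I x = b} \<le> r * (card I * p)"
proof -
  define X where "X = {x\<in>S. block s I x = b}"
  have "finite X" using finite_if_subset_cube[OF assms(1,4)] unfolding X_def by simp
  have narrow: "\<not> contains_pattern A L (I - {i}) (shadow s I S i b)" if "i \<in> I" for i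
    using assms(5,6) that unfolding wide_blocks_def by blast
  have "card (offset s I ` X) \<le> r * (card I * p)"
  proof (rule card_le_if_projections_le[where X = "\<lambda>_. {1..s}"])
    show "finite (offset s I ` X)" using \<open>finite X\<close> by simp
    show "offset s I ` X \<subseteq> Pi\<^sub>E I (\<lambda>_. {1..s})"
      using offset_in_cube[OF assms(3)] unfolding cube_def by blast
    show "card (drop_coord I i ` offset s I ` X) \<le> p" if "i \<in> I" for i
      using slices[OF that shadow_subset_cube[OF assms(3)] narrow[OF that]]
      unfolding X_def shadow_def .
    show "finite I" "I \<noteq> {}" "p < (r + 1) ^ (card I - 1)" by fact+
  qed
  then show ?thesis
    using inj_on_offset_block[OF assms(4)] unfolding X_def by (simp add: card_image)
qed

lemma card_avoiding_le_by_blocks: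
  assumes "finite A" "\<And>i. i \<in> I \<Longrightarrow> inj_on (L i) A" "finite I" "I \<noteq> {}" "0 < s"
    and slices: "\<And>i S'. i \<in> I \<Longrightarrow> S' \<subseteq> cube s (I - {i}) \<Longrightarrow>
      \<not> contains_pattern A L (I - {i}) S' \<Longrightarrow> card S' \<le> p"
    and "p < (r + 1) ^ (card I - 1)"
    and blocks: "\<And>S'. S' \<subseteq> cube t I \<Longrightarrow> \<not> contains_pattern A L I S' \<Longrightarrow> card S' \<le> q"
    and "S \<subseteq> cube (t * s) I" "\<not> contains_pattern A L I S"
  shows "card S \<le> q * (r * (card I * p))
    + card I * (t ^ (card I - 1) * ((s ^ (card I - 1)) ^ card A * (card A - 1))) * s ^ card I"
proof -
  define X where "X b = {x\<in>S. block s I x = b}" for b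
  define W where "W = wide_blocks s I S A L"
  have "finite S" using finite_if_subset_cube[OF assms(3,9)] .
  have "W \<subseteq> block s I ` S" unfolding W_def wide_blocks_def by blast
  have "card (block s I ` S - W) \<le> card (block s I ` S)" using \<open>finite S\<close> by (simp add: card_mono)
  also have "\<dots> \<le> q"
  proof (rule blocks)
    show "block s I ` S \<subseteq> cube t I" using block_in_cube[OF assms(5)] assms(9) by blast
    show "\<not> contains_pattern A L I (block s I ` S)"
      using contains_pattern_if_blocks_contain assms(10) by blast
  qed
  finally have "card (block s I ` S - W) \<le> q" .
  have narrow_le: "card (X b) \<le> r * (card I * p)" if "b \<in> block s I ` S - W" for b
  proof -
    have b: "b \<in> block s I ` S" "b \<notin> wide_blocks s I S A L" using that unfolding W_def by blast+
    show ?thesis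
      unfolding X_def using assms(3-5,9) b slices \<open>p < _\<close> by (rule card_narrow_block_le)
  qed
  have "S = (\<Union>b\<in>block s I ` S. X b)" unfolding X_def by auto
  then have "card S \<le> (\<Sum>b\<in>block s I ` S. card (X b))"
    using card_UN_le[of "block s I ` S" X] \<open>finite S\<close> by simp
  also have "\<dots> = (\<Sum>b\<in>block s I ` S - W. card (X b)) + (\<Sum>b\<in>W. card (X b))"
    using \<open>finite S\<close> \<open>W \<subseteq> _\<close> by (simp add: sum.subset_diff)
  also have "(\<Sum>b\<in>block s I ` S - W. card (X b)) \<le> card (block s I ` S - W) * (r * (card I * p))"
    using sum_bounded_above[of "block s I ` S - W" "\<lambda>b. card (X b)"] narrow_le by simp
  also have "\<dots> \<le> q * (r * (card I * p))"
    using \<open>card (block s I ` S - W) \<le> q\<close> by (rule mult_le_mono1)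
  also have "(\<Sum>b\<in>W. card (X b)) \<le> card W * s ^ card I"
    using sum_bounded_above[of W "\<lambda>b. card (X b)"] card_block_le[OF assms(3,5,9)]
    unfolding X_def by simp
  also have "\<dots>
      \<le> card I * (t ^ (card I - 1) * ((s ^ (card I - 1)) ^ card A * (card A - 1))) * s ^ card I"
    unfolding W_def using card_wide_blocks_le[OF assms(1,2,3,5,9,10)] by (rule mult_le_mono1)
  finally show ?thesis by simp
qed

text \<open>With \<open>R = 2(e + 2)c(c + 1) + 2\<close>, \<open>s = R\<^sup>e\<^sup>+\<^sup>1\<close> and \<open>r + 1 = (c + 1)R\<^sup>e\<close>, the
  threshold \<open>(r + 1)\<^sup>e\<^sup>+\<^sup>1\<close> exceeds the slice bound \<open>c s\<^sup>e\<close>, while the resulting bound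
  \<open>r (e + 2) c s\<^sup>e\<close> on blocks that are nowhere wide stays below \<open>s\<^sup>e\<^sup>+\<^sup>1 / 2\<close>.\<close>
lemma block_size_exists:
  fixes c e :: nat
  shows "\<exists>s r. 2 \<le> s \<and> c * s ^ e < (r + 1) ^ (e + 1) \<and>
    2 * (r * ((e + 2) * (c * s ^ e))) \<le> s ^ (e + 1)"
proof -
  define R where "R = 2 * (e + 2) * c * (c + 1) + 2"
  define r where "r = (c + 1) * R ^ e - 1"
  have "2 \<le> R" "0 < R" unfolding R_def by simp_all
  then have r_Suc: "r + 1 = (c + 1) * R ^ e" unfolding r_def by simp
  have p_eq: "c * (R ^ (e + 1)) ^ e = c * R ^ ((e + 1) * e)" by (simp only: power_mult)
  have "2 \<le> R ^ (e + 1)"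
    using \<open>2 \<le> R\<close>
    by (metis le_add2 order_trans power_increasing power_one_right \<open>0 < R\<close> Suc_eq_plus1 Suc_le_eq)
  moreover have "c * (R ^ (e + 1)) ^ e < (r + 1) ^ (e + 1)"
  proof -
    have "(r + 1) ^ (e + 1) = (c + 1) ^ (e + 1) * R ^ (e * (e + 1))"
      unfolding r_Suc by (simp only: power_mult_distrib power_mult[symmetric] mult.commute)
    moreover have "c < (c + 1) ^ (e + 1)"
      by (metis less_add_one order_less_le_trans self_le_power zero_less_Suc Suc_eq_plus1 le_add2)
    ultimately show ?thesis unfolding p_eq using \<open>0 < R\<close> by (simp add: mult.commute)
  qed
  moreover have "2 * (r * ((e + 2) * (c * (R ^ (e + 1)) ^ e))) \<le> (R ^ (e + 1)) ^ (e + 1)"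
  proof -
    have "r * ((e + 2) * (c * (R ^ (e + 1)) ^ e))
        \<le> (c + 1) * R ^ e * ((e + 2) * (c * R ^ ((e + 1) * e)))"
      unfolding p_eq r_def by (intro mult_le_mono1) simp
    also have "\<dots> = ((e + 2) * c * (c + 1)) * R ^ (e + (e + 1) * e)"
      by (simp add: power_add algebra_simps)
    finally have "2 * (r * ((e + 2) * (c * (R ^ (e + 1)) ^ e)))
        \<le> 2 * (((e + 2) * c * (c + 1)) * R ^ (e + (e + 1) * e))"
      by (rule mult_le_mono2)
    also have "\<dots> = (2 * ((e + 2) * c * (c + 1))) * R ^ (e + (e + 1) * e)" by (simp only: mult.assoc)
    also have "\<dots> \<le> R * R ^ (e + (e + 1) * e)"
      by (intro mult_le_mono1) (simp only: R_def mult.assoc le_add1)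
    also have "\<dots> = R ^ ((e + 1) * (e + 1))" by (simp flip: power_Suc add: algebra_simps)
    also have "\<dots> = (R ^ (e + 1)) ^ (e + 1)" by (simp only: power_mult)
    finally show ?thesis .
  qed
  ultimately show ?thesis by blast
qed

text \<open>With \<open>c = 2C + 1\<close> the bound \<open>c T\<close> reproduces itself at the next scale as soon as
  the blocks contribute a factor \<open>B \<le> K/2\<close>.\<close>
lemma le_if_recursive_bound:
  fixes x T B C K :: nat
  assumes "x \<le> (2 * C + 1) * T * B + T * C" "2 * B \<le> K" "0 < K"
  shows "x \<le> (2 * C + 1) * T * K"
proof -
  have "(2 * C + 1) * (2 * B) \<le> (2 * C + 1) * K" "(2 * C + 1) * 1 \<le> (2 * C + 1) * K"
    using assms(2,3) by (intro mult_le_mono2, simp)+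
  then have "(2 * C + 1) * B + C \<le> (2 * C + 1) * K" by (simp add: algebra_simps)
  then have "T * ((2 * C + 1) * B + C) \<le> T * ((2 * C + 1) * K)" by (rule mult_le_mono2)
  then show ?thesis using assms(1) by (simp add: algebra_simps)
qed

lemma card_avoiding_le_at_powers:
  assumes "finite A" "\<And>i. i \<in> I \<Longrightarrow> inj_on (L i) A" "finite I" "I \<noteq> {}" "0 < s"
    and slices: "\<And>i S'. i \<in> I \<Longrightarrow> S' \<subseteq> cube s (I - {i}) \<Longrightarrow>
      \<not> contains_pattern A L (I - {i}) S' \<Longrightarrow> card S' \<le> p"
    and "p < (r + 1) ^ (card I - 1)" and "2 * (r * (card I * p)) \<le> s ^ (card I - 1)"
  obtains c where "\<And>j S. S \<subseteq> cube (s ^ j) I \<Longrightarrow> \<not> contains_pattern A L I S \<Longrightarrow>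
    card S \<le> c * (s ^ j) ^ (card I - 1)"
proof
  define n where "n = card I"
  define C where "C = n * ((s ^ (n - 1)) ^ card A * (card A - 1)) * s ^ n"
  fix j S
  assume "S \<subseteq> cube (s ^ j) I" "\<not> contains_pattern A L I S"
  then show "card S \<le> (2 * C + 1) * (s ^ j) ^ (card I - 1)"
  proof (induction j arbitrary: S)
    case 0
    then have "card S \<le> card (cube 1 I)" using finite_cube[OF assms(3)] by (intro card_mono) auto
    then show ?case using assms(3) by (simp add: card_cube)
  next
    case (Suc j)
    define t where "t = s ^ j"
    have "card S \<le> ((2 * C + 1) * t ^ (n - 1)) * (r * (n * p))
        + n * (t ^ (n - 1) * ((s ^ (n - 1)) ^ card A * (card A - 1))) * s ^ n"
      unfolding n_def
    proof (rule card_avoiding_le_by_blocks[OF assms(1-5) slices \<open>p < _\<close>])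
      show "card S' \<le> (2 * C + 1) * t ^ (card I - 1)"
        if "S' \<subseteq> cube t I" "\<not> contains_pattern A L I S'" for S'
        using Suc.IH that unfolding t_def n_def by blast
      show "S \<subseteq> cube (t * s) I" using Suc.prems unfolding t_def by (simp add: mult.commute)
      show "\<not> contains_pattern A L I S" using Suc.prems(2) .
    qed
    also have "\<dots> = (2 * C + 1) * t ^ (n - 1) * (r * (n * p)) + t ^ (n - 1) * C"
      unfolding C_def by (simp add: algebra_simps)
    finally have "card S \<le> (2 * C + 1) * t ^ (n - 1) * (r * (n * p)) + t ^ (n - 1) * C" .
    then have "card S \<le> (2 * C + 1) * t ^ (n - 1) * s ^ (n - 1)"
      using assms(5,8) unfolding n_def by (intro le_if_recursive_bound) simp_all
    then show ?case unfolding t_def n_def by (simp add: power_mult_distrib algebra_simps)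
  qed
qed

lemma card_le_of_card_le_at_powers:
  assumes "2 \<le> s" "I \<noteq> {}" "S \<subseteq> cube m I"
    and at_powers: "\<And>j. S \<subseteq> cube (s ^ j) I \<Longrightarrow> card S \<le> c * (s ^ j) ^ e"
  shows "card S \<le> c * s ^ e * m ^ e"
proof (cases "m = 0")
  case True
  then have "S = {}" using assms(2,3) cube_0 by blast
  then show ?thesis by simp
next
  case False
  then have "1 \<le> m" by simp
  then obtain k where k: "s ^ k \<le> m" "m < s ^ (k + 1)" using ex_power_ivl1[OF assms(1)] by blast
  have "S \<subseteq> cube (s ^ (k + 1)) I" using assms(3) cube_mono[of m "s ^ (k + 1)" I] k(2) by simp
  then have "card S \<le> c * (s ^ (k + 1)) ^ e" by (rule at_powers)
  also have "\<dots> \<le> c * (s * m) ^ e" using k(1) by (intro mult_le_mono2 power_mono) auto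
  finally show ?thesis by (simp add: power_mult_distrib)
qed

lemma ex_card_avoiding_le_of_slices:
  assumes "finite A" "\<And>i. i \<in> I \<Longrightarrow> inj_on (L i) A" "finite I" "card I = e + 2"
    and slices: "\<And>i m S. i \<in> I \<Longrightarrow> S \<subseteq> cube m (I - {i}) \<Longrightarrow>
      \<not> contains_pattern A L (I - {i}) S \<Longrightarrow> card S \<le> c * m ^ e"
  shows "\<exists>c'. \<forall>m S. S \<subseteq> cube m I \<longrightarrow> \<not> contains_pattern A L I S \<longrightarrow> card S \<le> c' * m ^ (e + 1)"
proof -
  have "I \<noteq> {}" using assms(4) by auto
  obtain s r where "2 \<le> s" and p_less: "c * s ^ e < (r + 1) ^ (e + 1)"
    and two_B: "2 * (r * ((e + 2) * (c * s ^ e))) \<le> s ^ (e + 1)"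
    using block_size_exists by blast
  obtain c0 where c0: "\<And>j S. S \<subseteq> cube (s ^ j) I \<Longrightarrow> \<not> contains_pattern A L I S \<Longrightarrow>
      card S \<le> c0 * (s ^ j) ^ (card I - 1)"
  proof (rule card_avoiding_le_at_powers[OF assms(1-3) \<open>I \<noteq> {}\<close>])
    show "0 < s" using \<open>2 \<le> s\<close> by simp
    show "c * s ^ e < (r + 1) ^ (card I - 1)" "2 * (r * (card I * (c * s ^ e))) \<le> s ^ (card I - 1)"
      using p_less two_B assms(4) by simp_all
  qed (use slices in blast)+
  show ?thesis
  proof (intro exI allI impI)
    fix m S assume "S \<subseteq> cube m I" "\<not> contains_pattern A L I S"
    then show "card S \<le> c0 * s ^ (e + 1) * m ^ (e + 1)"
      using c0 assms(4) by (intro card_le_of_card_le_at_powers[OF \<open>2 \<le> s\<close> \<open>I \<noteq> {}\<close>]) simp_all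
  qed
qed

theorem card_avoiding_pattern_le:
  assumes "finite A" "finite I" "I \<noteq> {}" "\<And>i. i \<in> I \<Longrightarrow> inj_on (L i) A"
  shows "\<exists>c. \<forall>m S. S \<subseteq> cube m I \<longrightarrow> \<not> contains_pattern A L I S \<longrightarrow> card S \<le> c * m ^ (card I - 1)"
  using assms(2-4)
proof (induction "card I" arbitrary: I rule: less_induct)
  case less
  have "0 < card I" using less.prems(1,2) by (simp add: card_gt_0_iff)
  show ?case
  proof (cases "card I = 1")
    case True
    then obtain i where I: "I = {i}" by (auto simp: card_1_singleton_iff)
    then have "card S < card A" if "S \<subseteq> cube m I" "\<not> contains_pattern A L I S" for m S
      using card_less_if_avoids_pattern_1d[OF assms(1)] less.prems(3) that by blast
    then show ?thesis using True by (intro exI[of _ "card A"]) (simp add: less_imp_le)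
  next
    case False
    define e where "e = card I - 2"
    have card_I: "card I = e + 2" using False \<open>0 < card I\<close> unfolding e_def by linarith
    have "\<exists>c. \<forall>m S. S \<subseteq> cube m (I - {i}) \<longrightarrow> \<not> contains_pattern A L (I - {i}) S \<longrightarrow>
        card S \<le> c * m ^ e" if "i \<in> I" for i
    proof -
      have "card (I - {i}) = e + 1" using that less.prems(1) card_I by simp
      then have "card (I - {i}) < card I" "I - {i} \<noteq> {}" using card_I by (simp, force)
      then show ?thesis
        using less.hyps[of "I - {i}"] less.prems(1,3) \<open>card (I - {i}) = e + 1\<close> by simp
    qed
    then obtain cs where cs: "\<And>i m S. i \<in> I \<Longrightarrow> S \<subseteq> cube m (I - {i}) \<Longrightarrow>
        \<not> contains_pattern A L (I - {i}) S \<Longrightarrow> card S \<le> cs i * m ^ e"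
      by metis
    have "card S \<le> (\<Sum>i\<in>I. cs i) * m ^ e"
      if "i \<in> I" "S \<subseteq> cube m (I - {i})" "\<not> contains_pattern A L (I - {i}) S" for i m S
      using cs[OF that] member_le_sum[OF that(1), of cs] less.prems(1)
      by (meson le_trans mult_le_mono1 zero_le)
    from ex_card_avoiding_le_of_slices[OF assms(1) less.prems(3,1) card_I this]
    show ?thesis using card_I by simp
  qed
qed

section \<open>Realizers\<close>

lemma ex_rank_bij:
  fixes k :: "'a \<Rightarrow> 'b::linorder"
  assumes "finite A" "inj_on k A"
  shows "\<exists>rk. bij_betw rk A {1..card A} \<and> (\<forall>a\<in>A. \<forall>b\<in>A. rk a \<le> rk b \<longleftrightarrow> k a \<le> k b)"
proof -
  define rk where "rk a = card {b\<in>A. k b \<le> k a}" for a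
  have mono: "rk a \<le> rk b" if "a \<in> A" "b \<in> A" "k a \<le> k b" for a b
    unfolding rk_def using that assms(1) by (intro card_mono) auto
  have strict_mono: "rk a < rk b" if "a \<in> A" "b \<in> A" "k a < k b" for a b
  proof -
    have "{c\<in>A. k c \<le> k a} \<subseteq> {c\<in>A. k c \<le> k b}" "b \<notin> {c\<in>A. k c \<le> k a}"
      using that by auto
    then have "{c\<in>A. k c \<le> k a} \<subset> {c\<in>A. k c \<le> k b}" using that(2) by blast
    then show ?thesis unfolding rk_def using assms(1) by (intro psubset_card_mono) auto
  qed
  have iff: "\<forall>a\<in>A. \<forall>b\<in>A. rk a \<le> rk b \<longleftrightarrow> k a \<le> k b"
    using mono strict_mono by (meson linorder_not_le)
  have "inj_on rk A"
  proof (rule inj_onI)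
    fix a b assume "a \<in> A" "b \<in> A" "rk a = rk b"
    then have "rk a \<le> rk b" "rk b \<le> rk a" by simp_all
    then have "k a \<le> k b" "k b \<le> k a" using iff \<open>a \<in> A\<close> \<open>b \<in> A\<close> by blast+
    then have "k a = k b" by (rule order_antisym)
    then show "a = b" using assms(2) \<open>a \<in> A\<close> \<open>b \<in> A\<close> by (meson inj_onD)
  qed
  moreover have "rk ` A \<subseteq> {1..card A}"
  proof
    fix y assume "y \<in> rk ` A"
    then obtain a where a: "a \<in> A" "y = rk a" by blast
    then have "{b\<in>A. k b \<le> k a} \<noteq> {}" by blast
    then have "1 \<le> rk a" unfolding rk_def using assms(1) by (simp add: Suc_le_eq card_gt_0_iff)
    moreover have "rk a \<le> card A" unfolding rk_def using assms(1) by (intro card_mono) auto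
    ultimately show "y \<in> {1..card A}" using a by simp
  qed
  ultimately have "rk ` A = {1..card A}"
    by (intro card_subset_eq) (simp_all add: card_image)
  then show ?thesis using \<open>inj_on rk A\<close> iff unfolding bij_betw_def by blast
qed

text \<open>Putting the elements above \<open>x\<close> last, lexicographically after the size of their strict
  down-sets, gives a linear extension in which \<open>x\<close> lies above every element not above \<open>x\<close>.
  One such extension for every \<open>x\<close> already realizes the order.\<close>
lemma ex_linear_extension_below:
  assumes "finite A" "partial_order_on_set A le" "x \<in> A"
  shows "\<exists>L. bij_betw L A {1..card A} \<and> (\<forall>p\<in>A. \<forall>q\<in>A. le p q \<longrightarrow> L p \<le> L q) \<and>
    (\<forall>q\<in>A. \<not> le x q \<longrightarrow> L q < L x)"
proof -
  have refl: "\<And>p. p \<in> A \<Longrightarrow> le p p"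
    and antisym: "\<And>p q. p \<in> A \<Longrightarrow> q \<in> A \<Longrightarrow> le p q \<Longrightarrow> le q p \<Longrightarrow> p = q"
    and trans: "\<And>p q u. p \<in> A \<Longrightarrow> q \<in> A \<Longrightarrow> u \<in> A \<Longrightarrow> le p q \<Longrightarrow> le q u \<Longrightarrow> le p u"
    using assms(2) unfolding partial_order_on_set_def by blast+
  obtain h :: "'a \<Rightarrow> nat" where "inj_on h A"
    using finite_imp_inj_to_nat_seg[OF assms(1)] by blast
  define key where
    "key a = ((if le x a then 1 else 0 :: nat), card {b\<in>A. le b a \<and> b \<noteq> a}, h a)" for a
  have "inj_on key A" using \<open>inj_on h A\<close> unfolding key_def inj_on_def by auto
  then obtain L where L: "bij_betw L A {1..card A}"
    and L_key: "\<forall>a\<in>A. \<forall>b\<in>A. L a \<le> L b \<longleftrightarrow> key a \<le> key b"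
    using ex_rank_bij[OF assms(1)] by blast
  have "key p < key q" if "p \<in> A" "q \<in> A" "le p q" "p \<noteq> q" for p q
  proof -
    have "le x p \<Longrightarrow> le x q" using trans[OF assms(3) that(1,2)] that(3) by blast
    moreover have "{c\<in>A. le c p \<and> c \<noteq> p} \<subset> {c\<in>A. le c q \<and> c \<noteq> q}"
      using that trans antisym by blast
    then have "card {c\<in>A. le c p \<and> c \<noteq> p} < card {c\<in>A. le c q \<and> c \<noteq> q}"
      using assms(1) by (intro psubset_card_mono) auto
    ultimately show ?thesis unfolding key_def by (auto simp: less_prod_def')
  qed
  then have "\<forall>p\<in>A. \<forall>q\<in>A. le p q \<longrightarrow> L p \<le> L q"
    using L_key by (metis order_refl less_imp_le)
  moreover have "L q < L x" if "q \<in> A" "\<not> le x q" for q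
  proof -
    have "key q < key x" using that refl[OF assms(3)] by (simp add: key_def less_prod_def)
    then have "\<not> L x \<le> L q" using L_key that(1) assms(3) by auto
    then show ?thesis by simp
  qed
  ultimately show ?thesis using L by blast
qed

lemma realizer_exists:
  assumes "finite A" "partial_order_on_set A le"
  shows "\<exists>d>0. realizer A le d"
proof (cases "A = {}")
  case True
  then show ?thesis unfolding realizer_def by (intro exI[of _ 1]) (simp add: bij_betw_def)
next
  case False
  obtain xs where xs: "set xs = A" using finite_list[OF assms(1)] by blast
  have "\<forall>x\<in>A. \<exists>L. bij_betw L A {1..card A} \<and> (\<forall>p\<in>A. \<forall>q\<in>A. le p q \<longrightarrow> L p \<le> L q) \<and>
      (\<forall>q\<in>A. \<not> le x q \<longrightarrow> L q < L x)"
    using ex_linear_extension_below[OF assms] by blast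
  then obtain E where E: "\<forall>x\<in>A. bij_betw (E x) A {1..card A} \<and>
      (\<forall>p\<in>A. \<forall>q\<in>A. le p q \<longrightarrow> E x p \<le> E x q) \<and> (\<forall>q\<in>A. \<not> le x q \<longrightarrow> E x q < E x x)"
    by (rule bchoice[THEN exE])
  have "realizer A le (length xs)"
    unfolding realizer_def
  proof (intro exI[of _ "\<lambda>i. E (xs ! i)"] conjI allI impI ballI iffI)
    fix i assume "i < length xs"
    then show "bij_betw (E (xs ! i)) A {1..card A}" using E xs nth_mem by blast
  next
    fix p q i assume "p \<in> A" "q \<in> A" "le p q" "i < length xs"
    then show "E (xs ! i) p \<le> E (xs ! i) q" using E xs nth_mem by blast
  next
    fix p q assume "p \<in> A" "q \<in> A" and all: "\<forall>i<length xs. E (xs ! i) p \<le> E (xs ! i) q"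
    obtain i where "i < length xs" "xs ! i = p" using \<open>p \<in> A\<close> xs by (metis in_set_conv_nth)
    then show "le p q" using all E \<open>p \<in> A\<close> \<open>q \<in> A\<close> by (metis not_le)
  qed
  moreover have "0 < length xs" using False xs by auto
  ultimately show ?thesis by blast
qed

lemma poset_dim_realizer:
  assumes "finite A" "partial_order_on_set A le"
  shows "0 < poset_dim A le" "realizer A le (poset_dim A le)"
  using LeastI_ex[OF realizer_exists[OF assms]] unfolding poset_dim_def by blast+

definition coords :: "nat \<Rightarrow> nat list \<Rightarrow> (nat \<Rightarrow> nat)" where
  "coords d x = (\<lambda>i\<in>{..<d}. x ! i)"

lemma coords_in_cube:
  assumes "x \<in> grid m d"
  shows "coords d x \<in> cube m {..<d}"
proof -
  have "x ! i \<in> {1..m}" if "i < d" for i using assms that nth_mem unfolding grid_def by blast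
  then show ?thesis unfolding cube_def coords_def by (simp add: restrict_PiE_iff)
qed

lemma inj_on_coords_grid: "inj_on (coords d) (grid m d)"
proof (rule inj_onI)
  fix x y assume "x \<in> grid m d" "y \<in> grid m d" "coords d x = coords d y"
  then have "length x = d" "length y = d" "\<And>i. i < d \<Longrightarrow> coords d x i = coords d y i"
    by (auto simp: grid_def)
  then show "x = y" by (intro nth_equalityI) (auto simp: coords_def)
qed

lemma le_iff_le_if_strict_mono_on:
  fixes f :: "'a \<Rightarrow> 'b::linorder" and g :: "'a \<Rightarrow> 'c::linorder"
  assumes "inj_on f A" "\<And>a b. a \<in> A \<Longrightarrow> b \<in> A \<Longrightarrow> f a < f b \<Longrightarrow> g a < g b" "p \<in> A" "q \<in> A"
  shows "f p \<le> f q \<longleftrightarrow> g p \<le> g q"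
proof (cases "p = q")
  case False
  then have "f p < f q \<or> f q < f p" using assms(1,3,4) by (meson inj_onD linorder_neqE)
  then show ?thesis using assms(2)[OF assms(3,4)] assms(2)[OF assms(4,3)] by force
qed simp

lemma contains_copy_if_contains_pattern:
  assumes "S \<subseteq> grid m d" "partial_order_on_set A le"
    and inj: "\<And>i. i < d \<Longrightarrow> inj_on (L i) A"
    and realizes: "\<forall>p\<in>A. \<forall>q\<in>A. le p q \<longleftrightarrow> (\<forall>i<d. L i p \<le> L i q)"
    and "contains_pattern A L {..<d} (coords d ` S)"
  shows "contains_copy S A le"
proof -
  obtain f where f: "f ` A \<subseteq> coords d ` S"
    and f_pattern: "\<forall>a\<in>A. \<forall>b\<in>A. \<forall>i\<in>{..<d}. L i a < L i b \<longrightarrow> f a i < f b i"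
    using assms(5) unfolding contains_pattern_def by blast
  obtain g where g: "g ` A \<subseteq> S" "\<And>a. a \<in> A \<Longrightarrow> coords d (g a) = f a"
    using ex_lift_through_image[OF f] by blast
  have "g a ! i = f a i" if "a \<in> A" "i < d" for a i
    using fun_cong[OF g(2)[OF that(1)], of i] that(2) by (simp add: coords_def)
  then have le_iff: "L i p \<le> L i q \<longleftrightarrow> g p ! i \<le> g q ! i" if "p \<in> A" "q \<in> A" "i < d" for p q i
    using f_pattern that inj[OF that(3)] by (intro le_iff_le_if_strict_mono_on) auto
  have "length (g a) = d" if "a \<in> A" for a using g(1) that assms(1) by (auto simp: grid_def)
  then have order_iff: "le p q \<longleftrightarrow> pw_le (g p) (g q)" if "p \<in> A" "q \<in> A" for p q
    using realizes le_iff that unfolding pw_le_def list_all2_conv_all_nth by simp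
  have "inj_on g A"
  proof (rule inj_onI)
    fix p q assume "p \<in> A" "q \<in> A" "g p = g q"
    moreover have "pw_le (g p) (g p)" by (simp add: pw_le_def list.rel_refl)
    ultimately have "le p q" "le q p" using order_iff by simp_all
    then show "p = q" using assms(2) \<open>p \<in> A\<close> \<open>q \<in> A\<close> unfolding partial_order_on_set_def by blast
  qed
  then show ?thesis unfolding contains_copy_def using g(1) order_iff by blast
qed

lemma card_avoiding_copy_le:
  assumes "finite A" "partial_order_on_set A le" "realizer A le d" "0 < d"
  shows "\<exists>c. \<forall>m S. S \<subseteq> grid m d \<longrightarrow> \<not> contains_copy S A le \<longrightarrow> card S \<le> c * m ^ (d - 1)"
proof -
  obtain L :: "nat \<Rightarrow> 'a \<Rightarrow> nat" where bij: "\<And>i. i < d \<Longrightarrow> bij_betw (L i) A {1..card A}"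
    and realizes: "\<forall>p\<in>A. \<forall>q\<in>A. le p q \<longleftrightarrow> (\<forall>i<d. L i p \<le> L i q)"
    using assms(3) unfolding realizer_def by blast
  have inj: "\<And>i. i < d \<Longrightarrow> inj_on (L i) A" using bij by (simp add: bij_betw_def)
  have "\<exists>c. \<forall>m S. S \<subseteq> cube m {..<d} \<longrightarrow> \<not> contains_pattern A L {..<d} S \<longrightarrow>
      card S \<le> c * m ^ (d - 1)"
    using card_avoiding_pattern_le[of A "{..<d}" L] assms(1,4) inj by (simp add: lessThan_empty_iff)
  then obtain c where c: "\<And>m S. S \<subseteq> cube m {..<d} \<Longrightarrow> \<not> contains_pattern A L {..<d} S \<Longrightarrow>
      card S \<le> c * m ^ (d - 1)"
    by blast
  have "card S \<le> c * m ^ (d - 1)" if "S \<subseteq> grid m d" "\<not> contains_copy S A le" for m S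
  proof -
    have "card S = card (coords d ` S)"
      using inj_on_subset[OF inj_on_coords_grid that(1)] by (simp add: card_image)
    also have "\<dots> \<le> c * m ^ (d - 1)"
    proof (rule c)
      show "coords d ` S \<subseteq> cube m {..<d}" using that(1) by (auto intro: coords_in_cube)
      show "\<not> contains_pattern A L {..<d} (coords d ` S)"
        using contains_copy_if_contains_pattern[OF that(1) assms(2) inj realizes] that(2) by blast
    qed
    finally show ?thesis .
  qed
  then show ?thesis by blast
qed

theorem corollary4:
  fixes A :: "'a set" and le :: "'a \<Rightarrow> 'a \<Rightarrow> bool" and d :: nat
  assumes "finite A" and "partial_order_on_set A le" and "poset_dim A le = d"
  shows "\<exists>c::real. \<forall>m::nat. 0 < m \<longrightarrow>
           (\<forall>S. S \<subseteq> grid m d \<and> \<not> contains_copy S A le \<longrightarrow>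
                real (card S) \<le> c * real m ^ (d - 1))"
proof -
  obtain c where c: "\<And>m S. S \<subseteq> grid m d \<Longrightarrow> \<not> contains_copy S A le \<Longrightarrow> card S \<le> c * m ^ (d - 1)"
    using card_avoiding_copy_le[OF assms(1,2)] poset_dim_realizer[OF assms(1,2)] assms(3) by blast
  have "real (card S) \<le> real c * real m ^ (d - 1)"
    if "S \<subseteq> grid m d" "\<not> contains_copy S A le" for m S
    using c[OF that] of_nat_le_iff[of "card S" "c * m ^ (d - 1)"] by simp
  then show ?thesis by blast
qed

end
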